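(* Let $d\ge 7$, let $G$ be a $d$-regular graph with girth $5$, let $x\in V(G)$ with neighbors $x_1,\dots,x_d$ (in this fixed order) and bunches $X_t=N(x_t)\setminus\{x\}$, $t\in[d]$. Fix $i$ with $2\le i\le d$ and suppose every vertex of $X_i$ has backward degree at most $1$. Suppose $c$ is a proper partial coloring of $G$ defined on $N[x]\cup\bigcup_{t\in[i-1]}X_t$ with $c(x)=d+1$, $c(x_t)=t$ for all $t\in[d]$, and such that for each $t\in[i-1]$ the vertices of $X_t$ receive pairwise distinct colors from $[d]\setminus\{t\}$ (so that $x,x_1,\dots,x_{i-1}$ are b-vertices of colors $d+1,1,\dots,i-1$). Then $c$ can be extended to a proper partial coloring on $N[x]\cup\bigcup_{t\in[i]}X_t$ in which the vertices of $X_i$ receive pairwise distinct colors from $[d]\setminus\{i\}$, so that $x_i$ is also a b-vertex (of color $i$).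
   Context: $[k]=\{1,\dots,k\}$. The $i$-th bunch of $x$ is $X_i=N(x_i)\setminus\{x\}$, which has $d-1$ vertices. With respect to the ordering $x_1,\dots,x_d$, the backward degree of a vertex $v\in X_i$ is the number of neighbors of $v$ in $X_1\cup\dots\cup X_{i-1}$. A vertex $v$ is a b-vertex of a (partial) coloring with colors $[d+1]$ if all $d+1$ colors appear on its closed neighborhood $N[v]$. *)

theory Defs
  imports Main
begin

definition simple_graph :: "'a set \<Rightarrow> ('a \<Rightarrow> 'a \<Rightarrow> bool) \<Rightarrow> bool" where
  "simple_graph V E \<longleftrightarrow> finite V \<and> (\<forall>u v. E u v \<longrightarrow> u \<in> V \<and> v \<in> V)
     \<and> (\<forall>u v. E u v \<longrightarrow> E v u) \<and> (\<forall>v. \<not> E v v)"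

definition nbhd :: "'a set \<Rightarrow> ('a \<Rightarrow> 'a \<Rightarrow> bool) \<Rightarrow> 'a \<Rightarrow> 'a set" where
  "nbhd V E v = {u \<in> V. E v u}"

definition closed_nbhd :: "'a set \<Rightarrow> ('a \<Rightarrow> 'a \<Rightarrow> bool) \<Rightarrow> 'a \<Rightarrow> 'a set" where
  "closed_nbhd V E v = insert v (nbhd V E v)"

definition regular :: "'a set \<Rightarrow> ('a \<Rightarrow> 'a \<Rightarrow> bool) \<Rightarrow> nat \<Rightarrow> bool" where
  "regular V E d \<longleftrightarrow> (\<forall>v\<in>V. card (nbhd V E v) = d)"

definition girth5 :: "'a set \<Rightarrow> ('a \<Rightarrow> 'a \<Rightarrow> bool) \<Rightarrow> bool" where
  "girth5 V E \<longleftrightarrow>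
     (\<nexists>a b c. distinct [a,b,c] \<and> E a b \<and> E b c \<and> E c a)
   \<and> (\<nexists>a b c e. distinct [a,b,c,e] \<and> E a b \<and> E b c \<and> E c e \<and> E e a)
   \<and> (\<exists>a b c e f. distinct [a,b,c,e,f] \<and> E a b \<and> E b c \<and> E c e \<and> E e f \<and> E f a)"

definition bunch :: "'a set \<Rightarrow> ('a \<Rightarrow> 'a \<Rightarrow> bool) \<Rightarrow> 'a \<Rightarrow> (nat \<Rightarrow> 'a) \<Rightarrow> nat \<Rightarrow> 'a set" where
  "bunch V E x xs t = nbhd V E (xs t) - {x}"

definition backward_degree :: "'a set \<Rightarrow> ('a \<Rightarrow> 'a \<Rightarrow> bool) \<Rightarrow> 'a \<Rightarrow> (nat \<Rightarrow> 'a) \<Rightarrow> nat \<Rightarrow> 'a \<Rightarrow> nat" where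
  "backward_degree V E x xs i v = card (nbhd V E v \<inter> (\<Union>t\<in>{1..<i}. bunch V E x xs t))"

definition proper_partial :: "('a \<Rightarrow> 'a \<Rightarrow> bool) \<Rightarrow> ('a \<rightharpoonup> nat) \<Rightarrow> bool" where
  "proper_partial E c \<longleftrightarrow> (\<forall>u v. u \<in> dom c \<longrightarrow> v \<in> dom c \<longrightarrow> E u v \<longrightarrow> c u \<noteq> c v)"

end

theory Submission
  imports Defs "HOL-Combinatorics.Transposition"
begin

text \<open>Colour the bunch X_i by a bijection onto [d] - {i}. By girth 5, X_i is independent, its only
  coloured neighbours are x_i and back-neighbours in earlier bunches, and backward degree at most 1
  leaves each vertex of X_i at most one forbidden colour k. Such a bijection exists once no colour k
  is forbidden on all of X_i (swap conflicting values one pair at a time). It cannot be: a vertex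
  forbidding k sees k in some X_t with t < i and t \<noteq> k, and since X_t is rainbow and there are no
  4-cycles, each such X_t serves at most one vertex of X_i; so at most |[i-1] - {k}| < d - 1 = |X_i|
  vertices forbid k.\<close>

context
  fixes X :: "'a set" and C :: "'b set" and F :: "'a \<Rightarrow> 'b \<Rightarrow> bool"
  assumes at_most_one: "\<And>v k k'. v \<in> X \<Longrightarrow> F v k \<Longrightarrow> F v k' \<Longrightarrow> k = k'"
    and allowed: "\<And>k. k \<in> C \<Longrightarrow> \<exists>v\<in>X. \<not> F v k"
begin

lemma bij_betw_reduce_conflicts:
  assumes \<sigma>: "bij_betw \<sigma> X C" and v: "v \<in> X" "F v (\<sigma> v)"
  obtains \<sigma>' where "bij_betw \<sigma>' X C"
    and "{u \<in> X. F u (\<sigma>' u)} \<subseteq> {u \<in> X. F u (\<sigma> u)} - {v}"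
proof -
  obtain w where w: "w \<in> X" "\<not> F w (\<sigma> v)"
    using allowed bij_betwE[OF \<sigma>] v(1) by blast
  have "w \<noteq> v" using v w by blast
  have "bij_betw (transpose v w) X X" using v(1) w(1) by simp
  from bij_betw_trans[OF this \<sigma>] have "bij_betw (\<sigma> \<circ> transpose v w) X C" .
  moreover have "{u \<in> X. F u ((\<sigma> \<circ> transpose v w) u)} \<subseteq> {u \<in> X. F u (\<sigma> u)} - {v}"
  proof
    fix u assume "u \<in> {u \<in> X. F u ((\<sigma> \<circ> transpose v w) u)}"
    then have u: "u \<in> X" "F u (\<sigma> (transpose v w u))" by simp_all
    have "u \<noteq> v"
    proof
      assume "u = v"
      then have "\<sigma> w = \<sigma> v" using at_most_one[OF v(1) _ v(2)] u(2) by simp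
      then show False using bij_betw_imp_inj_on[OF \<sigma>] v(1) w(1) \<open>w \<noteq> v\<close>
        by (meson inj_on_contraD)
    qed
    moreover have "F u (\<sigma> u)" using u w \<open>u \<noteq> v\<close> by (cases "u = w") auto
    ultimately show "u \<in> {u \<in> X. F u (\<sigma> u)} - {v}" using u by simp
  qed
  ultimately show thesis by (rule that)
qed

lemma bij_betw_avoiding_forbidden:
  assumes "finite X" "finite C" "card X = card C"
  shows "\<exists>\<sigma>. bij_betw \<sigma> X C \<and> (\<forall>v\<in>X. \<not> F v (\<sigma> v))"
proof -
  have "\<exists>\<sigma>'. bij_betw \<sigma>' X C \<and> (\<forall>v\<in>X. \<not> F v (\<sigma>' v))"
    if "bij_betw \<sigma> X C" for \<sigma>
    using that
  proof (induction "card {v \<in> X. F v (\<sigma> v)}" arbitrary: \<sigma> rule: less_induct)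
    case less
    show ?case
    proof (cases "\<exists>v\<in>X. F v (\<sigma> v)")
      case True
      then obtain v where v: "v \<in> X" "F v (\<sigma> v)" by blast
      then obtain \<sigma>' where \<sigma>': "bij_betw \<sigma>' X C"
        and sub: "{u \<in> X. F u (\<sigma>' u)} \<subseteq> {u \<in> X. F u (\<sigma> u)} - {v}"
        using bij_betw_reduce_conflicts[OF less.prems] by blast
      have "card {u \<in> X. F u (\<sigma>' u)} \<le> card ({u \<in> X. F u (\<sigma> u)} - {v})"
        using sub \<open>finite X\<close> by (intro card_mono) auto
      also have "\<dots> < card {u \<in> X. F u (\<sigma> u)}"
        using v \<open>finite X\<close> by (intro card_Diff1_less) auto
      finally show ?thesis using less.hyps \<sigma>' by blast
    qed (use less.prems in blast)
  qed
  moreover obtain \<sigma> where "bij_betw \<sigma> X C"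
    using assms finite_same_card_bij by blast
  ultimately show ?thesis by blast
qed

end

lemma proper_partial_extend_on_independent_set:
  assumes c: "proper_partial E c"
    and sym: "\<And>u v. E u v \<Longrightarrow> E v u"
    and indep: "\<And>u w. u \<in> X \<Longrightarrow> w \<in> X \<Longrightarrow> \<not> E u w"
    and compatible: "\<And>u w. u \<in> X \<Longrightarrow> w \<in> dom c \<Longrightarrow> E u w \<Longrightarrow> c w \<noteq> Some (\<sigma> u)"
  shows "proper_partial E (\<lambda>u. if u \<in> X then Some (\<sigma> u) else c u)"
  unfolding proper_partial_def
proof (intro allI impI)
  fix u v assume "u \<in> dom (\<lambda>u. if u \<in> X then Some (\<sigma> u) else c u)"
    and "v \<in> dom (\<lambda>u. if u \<in> X then Some (\<sigma> u) else c u)" and e: "E u v"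
  then have u: "u \<in> X \<or> u \<in> dom c" and v: "v \<in> X \<or> v \<in> dom c"
    by (auto split: if_splits)
  show "(if u \<in> X then Some (\<sigma> u) else c u) \<noteq> (if v \<in> X then Some (\<sigma> v) else c v)"
  proof (cases "u \<in> X"; cases "v \<in> X")
    assume "u \<in> X" "v \<notin> X"
    then show ?thesis using v compatible[OF _ _ e] by auto
  next
    assume "u \<notin> X" "v \<in> X"
    then show ?thesis using u compatible[OF _ _ sym[OF e]] by auto
  next
    assume "u \<notin> X" "v \<notin> X"
    then show ?thesis using u v e c unfolding proper_partial_def by simp
  qed (use indep e in blast)
qed

locale girth_ge5_graph =
  fixes V :: "'a set" and E :: "'a \<Rightarrow> 'a \<Rightarrow> bool"
  assumes simple: "simple_graph V E"
    and no_triangle: "E a b \<Longrightarrow> E b c \<Longrightarrow> E c a \<Longrightarrow> False"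
    and no_C4: "E a b \<Longrightarrow> E b c \<Longrightarrow> E c e \<Longrightarrow> E e a \<Longrightarrow> a \<noteq> c \<Longrightarrow> b \<noteq> e \<Longrightarrow> False"

lemma girth5_imp_girth_ge5_graph:
  assumes graph: "simple_graph V E" and "girth5 V E"
  shows "girth_ge5_graph V E"
proof (rule girth_ge5_graph.intro)
  have irrefl: "\<And>v. \<not> E v v" using graph unfolding simple_graph_def by blast
  note girth5 = \<open>girth5 V E\<close>[unfolded girth5_def]
  show False if "E a b" "E b c" "E c a" for a b c
  proof -
    have "distinct [a, b, c]" using that irrefl by auto
    then show False using that conjunct1[OF girth5] by blast
  qed
  show False if "E a b" "E b c" "E c e" "E e a" "a \<noteq> c" "b \<noteq> e" for a b c e
  proof -
    have "distinct [a, b, c, e]" using that irrefl by auto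
    then show False using that conjunct1[OF conjunct2[OF girth5]] by blast
  qed
qed (fact graph)

context girth_ge5_graph
begin

lemma adj_sym: "E u v \<Longrightarrow> E v u"
  and adj_in_V: "E u v \<Longrightarrow> u \<in> V \<and> v \<in> V"
  and finite_V: "finite V"
  using simple unfolding simple_graph_def by blast+

lemma common_neighbour_unique:
  assumes "E a b" "E b c" "E a e" "E e c" "a \<noteq> c"
  shows "b = e"
  using no_C4[OF assms(1,2) adj_sym[OF assms(4)] adj_sym[OF assms(3)] assms(5)] by blast

end

locale vertex_with_bunches = girth_ge5_graph +
  fixes x :: 'a and d :: nat and xs :: "nat \<Rightarrow> 'a"
  assumes xs_bij: "bij_betw xs {1..d} (nbhd V E x)"
begin

abbreviation X :: "nat \<Rightarrow> 'a set" where
  "X t \<equiv> bunch V E x xs t"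

lemma adj_xs: "t \<in> {1..d} \<Longrightarrow> E x (xs t)"
  using bij_betwE[OF xs_bij] unfolding nbhd_def by blast

lemma xs_eq_iff: "s \<in> {1..d} \<Longrightarrow> t \<in> {1..d} \<Longrightarrow> xs s = xs t \<longleftrightarrow> s = t"
  using bij_betw_imp_inj_on[OF xs_bij] by (auto dest: inj_onD)

lemma mem_bunch_iff: "u \<in> X t \<longleftrightarrow> u \<in> V \<and> E (xs t) u \<and> u \<noteq> x"
  unfolding bunch_def nbhd_def by blast

lemma finite_bunch: "finite (X t)"
  using finite_V by (rule finite_subset[rotated]) (auto simp: mem_bunch_iff)

lemma card_bunch:
  assumes "regular V E d" "t \<in> {1..d}"
  shows "card (X t) = d - 1"
proof -
  have "x \<in> nbhd V E (xs t)" "card (nbhd V E (xs t)) = d"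
    using assms adj_sym[OF adj_xs] adj_in_V[OF adj_xs] unfolding nbhd_def regular_def by auto
  then show ?thesis unfolding bunch_def by (simp add: card_Diff_singleton)
qed

lemma bunch_not_adj_center:
  assumes "t \<in> {1..d}" "u \<in> X t"
  shows "\<not> E x u"
  using no_triangle[OF adj_xs[OF assms(1)] _ adj_sym] assms(2) by (auto simp: mem_bunch_iff)

lemma xs_notin_bunch: "s \<in> {1..d} \<Longrightarrow> t \<in> {1..d} \<Longrightarrow> xs s \<notin> X t"
  using bunch_not_adj_center adj_xs by blast

lemma bunch_independent:
  assumes "u \<in> X t" "w \<in> X t"
  shows "\<not> E u w"
  using no_triangle[of "xs t" u w] adj_sym[of "xs t" w] assms by (auto simp: mem_bunch_iff)

lemma bunch_adj_center_nbr:
  assumes "t \<in> {1..d}" "u \<in> X t" "E u y" "E x y"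
  shows "y = xs t"
  using common_neighbour_unique[OF adj_xs[OF assms(1)] _ assms(4) adj_sym[OF assms(3)]] assms(2)
  by (auto simp: mem_bunch_iff)

lemma bunches_disjoint:
  assumes "s \<in> {1..d}" "t \<in> {1..d}" "s \<noteq> t"
  shows "X s \<inter> X t = {}"
proof -
  have "xs s = xs t" if "u \<in> X s" "u \<in> X t" for u
    using bunch_adj_center_nbr[OF assms(1) that(1) adj_sym adj_xs[OF assms(2)]] that(2)
    by (simp add: mem_bunch_iff)
  then show ?thesis using xs_eq_iff assms by blast
qed

lemma bunch_disjoint_coloured:
  assumes "i \<in> {1..d}"
  shows "X i \<inter> (closed_nbhd V E x \<union> (\<Union>t\<in>{1..<i}. X t)) = {}"
proof -
  have "X i \<inter> closed_nbhd V E x = {}"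
    using bunch_not_adj_center[OF assms] unfolding closed_nbhd_def nbhd_def
    by (auto simp: mem_bunch_iff)
  moreover have "X i \<inter> X t = {}" if "t \<in> {1..<i}" for t
    using bunches_disjoint[of i t] assms that by auto
  ultimately show ?thesis by blast
qed

lemma bunch_nbr_in_coloured:
  assumes "i \<in> {1..d}" "v \<in> X i" "w \<in> closed_nbhd V E x \<union> (\<Union>t\<in>{1..<i}. X t)" "E v w"
  shows "w = xs i \<or> w \<in> (\<Union>t\<in>{1..<i}. X t)"
  using assms bunch_adj_center_nbr[OF assms(1,2,4)] bunch_not_adj_center[OF assms(1,2)] adj_sym[OF assms(4)]
  unfolding closed_nbhd_def nbhd_def by auto

definition back_nbr_coloured :: "('a \<rightharpoonup> nat) \<Rightarrow> nat \<Rightarrow> 'a \<Rightarrow> nat \<Rightarrow> bool" where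
  "back_nbr_coloured c i v k \<longleftrightarrow> (\<exists>w \<in> (\<Union>t\<in>{1..<i}. X t). E v w \<and> c w = Some k)"

lemma back_nbr_coloured_unique:
  assumes "backward_degree V E x xs i v \<le> 1"
    and "back_nbr_coloured c i v k" "back_nbr_coloured c i v k'"
  shows "k = k'"
proof -
  obtain w w' where "w \<in> nbhd V E v \<inter> (\<Union>t\<in>{1..<i}. X t)" "c w = Some k"
    and "w' \<in> nbhd V E v \<inter> (\<Union>t\<in>{1..<i}. X t)" "c w' = Some k'"
    using assms(2,3) adj_in_V unfolding back_nbr_coloured_def nbhd_def by blast
  moreover have "finite (nbhd V E v)" using finite_V unfolding nbhd_def by simp
  ultimately have "w = w'"
    using assms(1) card_le_Suc0_iff_eq[of "nbhd V E v \<inter> (\<Union>t\<in>{1..<i}. X t)"]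
    unfolding backward_degree_def by auto
  then show ?thesis using \<open>c w = Some k\<close> \<open>c w' = Some k'\<close> by simp
qed

lemma card_back_nbr_coloured_le:
  assumes i: "i \<in> {1..d}"
    and c_bunch: "\<forall>t\<in>{1..<i}. inj_on c (X t) \<and> (\<forall>v \<in> X t. the (c v) \<in> {1..d} - {t})"
  shows "card {v \<in> X i. back_nbr_coloured c i v k} \<le> card ({1..<i} - {k})"
proof -
  define S where "S t = {v \<in> X i. \<exists>w \<in> X t. E v w \<and> c w = Some k}" for t
  have "{v \<in> X i. back_nbr_coloured c i v k} = (\<Union>t\<in>{1..<i} - {k}. S t)"
    using c_bunch unfolding back_nbr_coloured_def S_def by fastforce
  moreover have "card (S t) \<le> 1" if t: "t \<in> {1..<i}" for t
  proof -
    have "v = v'" if "v \<in> S t" "v' \<in> S t" for v v'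
    proof (rule ccontr)
      obtain w w' where w: "w \<in> X t" "E v w" "c w = Some k"
        and w': "w' \<in> X t" "E v' w'" "c w' = Some k" and "v \<in> X i" "v' \<in> X i"
        using \<open>v \<in> S t\<close> \<open>v' \<in> S t\<close> unfolding S_def by blast
      moreover have "w = w'" using c_bunch t w w' by (metis inj_onD)
      moreover assume "v \<noteq> v'"
      ultimately have "xs i = w"
        using common_neighbour_unique[OF adj_sym _ _ adj_sym, of "xs i" v v' w]
        by (simp add: mem_bunch_iff)
      then show False using xs_notin_bunch[of i t] i t \<open>w \<in> X t\<close> by auto
    qed
    moreover have "finite (S t)" using finite_bunch unfolding S_def by simp
    ultimately show ?thesis unfolding One_nat_def card_le_Suc0_iff_eq[OF \<open>finite (S t)\<close>] by blast
  qed
  ultimately have "card {v \<in> X i. back_nbr_coloured c i v k} \<le> (\<Sum>t\<in>{1..<i} - {k}. card (S t))"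
    using card_UN_le[of "{1..<i} - {k}" S] by simp
  also have "\<dots> \<le> card ({1..<i} - {k})"
    using sum_bounded_above[of "{1..<i} - {k}" "\<lambda>t. card (S t)" 1] \<open>\<And>t. t \<in> {1..<i} \<Longrightarrow> card (S t) \<le> 1\<close>
    by simp
  finally show ?thesis .
qed

lemma ex_not_back_nbr_coloured:
  assumes reg: "regular V E d" and i: "i \<in> {1..d}" and k: "k \<in> {1..d} - {i}"
    and c_bunch: "\<forall>t\<in>{1..<i}. inj_on c (X t) \<and> (\<forall>v \<in> X t. the (c v) \<in> {1..d} - {t})"
  shows "\<exists>v \<in> X i. \<not> back_nbr_coloured c i v k"
proof -
  have "card ({1..<i} - {k}) < d - 1"
  proof (cases "k < i")
    case True
    then show ?thesis using i k by (simp add: card_Diff_singleton)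
  next
    case False
    then have "i < d" using i k by auto
    moreover have "card ({1..<i} - {k}) \<le> i - 1" using card_Diff1_le[of "{1..<i}" k] by simp
    ultimately show ?thesis using i by auto
  qed
  then have "card {v \<in> X i. back_nbr_coloured c i v k} < card (X i)"
    using card_back_nbr_coloured_le[OF i c_bunch, of k] card_bunch[OF reg i] by linarith
  then have "{v \<in> X i. back_nbr_coloured c i v k} \<noteq> X i" by auto
  then show ?thesis by blast
qed

lemma ex_bij_avoiding_back_nbr_colours:
  assumes reg: "regular V E d" and i: "i \<in> {1..d}"
    and bdeg: "\<forall>v \<in> X i. backward_degree V E x xs i v \<le> 1"
    and c_bunch: "\<forall>t\<in>{1..<i}. inj_on c (X t) \<and> (\<forall>v \<in> X t. the (c v) \<in> {1..d} - {t})"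
  shows "\<exists>\<sigma>. bij_betw \<sigma> (X i) ({1..d} - {i}) \<and> (\<forall>v \<in> X i. \<not> back_nbr_coloured c i v (\<sigma> v))"
proof (rule bij_betw_avoiding_forbidden)
  show "card (X i) = card ({1..d} - {i})"
    using card_bunch[OF reg i] i by (simp add: card_Diff_singleton)
  show "k = k'" if "v \<in> X i" "back_nbr_coloured c i v k" "back_nbr_coloured c i v k'" for v k k'
    using back_nbr_coloured_unique bdeg that by blast
  show "\<exists>v \<in> X i. \<not> back_nbr_coloured c i v k" if "k \<in> {1..d} - {i}" for k
    using ex_not_back_nbr_coloured[OF reg i that c_bunch] .
qed (simp_all add: finite_bunch)

end

theorem mainTheorem6:
  fixes V :: "'a set" and E :: "'a \<Rightarrow> 'a \<Rightarrow> bool" and d i :: nat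
    and x :: 'a and xs :: "nat \<Rightarrow> 'a" and c :: "'a \<rightharpoonup> nat"
  assumes graph: "simple_graph V E"
    and d7: "d \<ge> 7"
    and reg: "regular V E d"
    and girth: "girth5 V E"
    and xV: "x \<in> V"
    and xs_bij: "bij_betw xs {1..d} (nbhd V E x)"
    and i_range: "2 \<le> i" "i \<le> d"
    and bdeg: "\<forall>v \<in> bunch V E x xs i. backward_degree V E x xs i v \<le> 1"
    and c_proper: "proper_partial E c"
    and c_dom: "dom c = closed_nbhd V E x \<union> (\<Union>t\<in>{1..<i}. bunch V E x xs t)"
    and c_x: "c x = Some (d + 1)"
    and c_xs: "\<forall>t\<in>{1..d}. c (xs t) = Some t"
    and c_bunch: "\<forall>t\<in>{1..<i}. inj_on c (bunch V E x xs t)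
                    \<and> (\<forall>v \<in> bunch V E x xs t. the (c v) \<in> {1..d} - {t})"
  shows "\<exists>c'. c \<subseteq>\<^sub>m c' \<and> proper_partial E c'
            \<and> dom c' = closed_nbhd V E x \<union> (\<Union>t\<in>{1..i}. bunch V E x xs t)
            \<and> inj_on c' (bunch V E x xs i)
            \<and> (\<forall>v \<in> bunch V E x xs i. the (c' v) \<in> {1..d} - {i})"
proof -
  interpret vertex_with_bunches V E x d xs
    using girth5_imp_girth_ge5_graph[OF graph girth] xs_bij
    by (simp add: vertex_with_bunches_def vertex_with_bunches_axioms_def)
  have i: "i \<in> {1..d}" using i_range by simp
  obtain \<sigma> where \<sigma>: "bij_betw \<sigma> (X i) ({1..d} - {i})"
    and avoids: "\<forall>v \<in> X i. \<not> back_nbr_coloured c i v (\<sigma> v)"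
    using ex_bij_avoiding_back_nbr_colours[OF reg i bdeg c_bunch] by blast
  define c' where "c' u = (if u \<in> X i then Some (\<sigma> u) else c u)" for u
  have "proper_partial E c'"
    unfolding c'_def
  proof (rule proper_partial_extend_on_independent_set[OF c_proper adj_sym bunch_independent])
    fix u w assume "u \<in> X i" "w \<in> dom c" "E u w"
    then have "w = xs i \<or> w \<in> (\<Union>t\<in>{1..<i}. X t)" using bunch_nbr_in_coloured i c_dom by simp
    then show "c w \<noteq> Some (\<sigma> u)"
      using c_xs i bij_betwE[OF \<sigma>] avoids \<open>u \<in> X i\<close> \<open>E u w\<close>
      unfolding back_nbr_coloured_def by auto
  qed
  moreover have "c \<subseteq>\<^sub>m c'"
    using bunch_disjoint_coloured[OF i] c_dom unfolding c'_def map_le_def by auto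
  moreover have "{1..i} = insert i {1..<i}" using i by auto
  then have "dom c' = closed_nbhd V E x \<union> (\<Union>t\<in>{1..i}. X t)"
    using c_dom unfolding c'_def dom_def by auto
  moreover have "inj_on c' (X i)" "\<forall>v \<in> X i. the (c' v) \<in> {1..d} - {i}"
    using \<sigma> bij_betwE[OF \<sigma>] unfolding c'_def bij_betw_def inj_on_def by auto
  ultimately show ?thesis by blast
qed

end
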